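(* Fix $\epsilon>0$ arbitrary. (i) For each $l=0,2,3,4,\dots$, the equation $\lambda^2+\hat r_lG_l(\epsilon\lambda)=0$ has $l+2$ solutions, denoted $\lambda_{l,j}(\epsilon)$, $j=1,\dots,l+2$ (the deformation resonance energies). (ii) The set $\{\lambda_{l,j}(\epsilon)\}$ is symmetric about the imaginary axis (i.e. if $\lambda$ is a solution then so is $-\overline{\lambda}$), and every solution satisfies $\operatorname{Im}\lambda_{l,j}<0$.
   Context: Parameters $\mathrm{Ca}>0$, $\mathrm{We}>0$, $\gamma>1$. $h_l^{(1)}$ is the outgoing spherical Hankel function of order $l$ and $G_l(z)=z\,\partial h_l^{(1)}(z)/h_l^{(1)}(z)$. $\hat r_0=\frac{3\gamma}{2}\mathrm{Ca}+2(3\gamma-1)\frac{1}{\mathrm{We}}$ and $\hat r_l=\frac{1}{\mathrm{We}}(l+2)(l-1)$ for $l\ge1$. *)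

theory Defs
  imports "HOL-Complex_Analysis.Complex_Analysis"
begin

definition sph_hankel1 :: "nat \<Rightarrow> complex \<Rightarrow> complex" where
  "sph_hankel1 l z = (- \<i>) ^ (l + 1) * exp (\<i> * z) / z *
     (\<Sum>k\<le>l. (\<i> / (2 * z)) ^ k * (fact (l + k) / (fact k * fact (l - k))))"

definition G_fun :: "nat \<Rightarrow> complex \<Rightarrow> complex" where
  "G_fun l z = z * deriv (sph_hankel1 l) z / sph_hankel1 l z"

definition r_hat :: "real \<Rightarrow> real \<Rightarrow> real \<Rightarrow> nat \<Rightarrow> real" where
  "r_hat Ca We \<gamma> l =
     (if l = 0 then 3 * \<gamma> / 2 * Ca + 2 * (3 * \<gamma> - 1) * (1 / We)
      else (1 / We) * (real l + 2) * (real l - 1))"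

definition resonances :: "real \<Rightarrow> real \<Rightarrow> real \<Rightarrow> real \<Rightarrow> nat \<Rightarrow> complex set" where
  "resonances Ca We \<gamma> \<epsilon> l =
     {w. w \<noteq> 0 \<and> sph_hankel1 l (of_real \<epsilon> * w) \<noteq> 0 \<and>
          w\<^sup>2 + of_real (r_hat Ca We \<gamma> l) * G_fun l (of_real \<epsilon> * w) = 0}"

end

(* The spherical Hankel function factors as h_l(z) = (-i)^(l+1) e^(iz) T_l(z) / z^(l+1) with a
   polynomial T_l of degree l, so G_l = F_l - (l+1) where F_l(z) = iz + z T_l'(z) / T_l(z).
   The recurrences of T_l turn F_l into the continued fraction F_0(z) = iz,
   F_(l+1)(z) = z^2 / (2l+1 - F_l(z)). By induction on l, for Im z > 0 the value F_l(z) lies in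
   the cone {b z^2 - a | a, b >= 0}, and on the real axis Im F_l(z) has the sign of z; in
   particular T_l has no zeros in the closed upper half-plane except possibly 0. Since r_l > 0,
   a solution with Im lambda > 0 would force lambda^2 to be a positive real, and for real lambda
   the imaginary part of the equation cannot vanish. Multiplying the equation by T_l(eps lambda)
   gives a polynomial of degree l+2 whose roots, counted with multiplicity, are exactly the
   resonances, and T_l(-conj z) = (-1)^l conj (T_l z) gives the symmetry. *)

theory Submission
  imports Defs "HOL-Computational_Algebra.Fundamental_Theorem_Algebra"
begin

definition bessel_coeff :: "nat \<Rightarrow> nat \<Rightarrow> real" where
  "bessel_coeff l k = fact (l + k) / (fact k * fact (l - k))"

lemma bessel_coeff_0 [simp]: "bessel_coeff l 0 = 1"
  by (simp add: bessel_coeff_def)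

lemma bessel_coeff_pos: "bessel_coeff l k > 0"
  by (simp add: bessel_coeff_def)

lemma bessel_coeff_Suc_Suc:
  assumes "k < l"
  shows "bessel_coeff (Suc l) (Suc k) = bessel_coeff l (Suc k) + 2 * (real l + real k + 1) * bessel_coeff l k"
proof -
  obtain m where l: "l = Suc k + m" using assms less_imp_Suc_add by blast
  have "Suc l - Suc k = Suc m" "l - Suc k = m" "l - k = Suc m"
    "Suc l + Suc k = Suc (Suc (Suc (k + k + m)))" "l + Suc k = Suc (Suc (k + k + m))" "l + k = Suc (k + k + m)"
    using l by auto
  then show ?thesis unfolding bessel_coeff_def
    by (simp only: fact_Suc of_nat_Suc) (simp add: l divide_simps, simp add: algebra_simps)
qed

lemma bessel_coeff_Suc_self: "bessel_coeff (Suc l) (Suc l) = 2 * (2 * real l + 1) * bessel_coeff l l"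
proof -
  have "Suc l + Suc l = Suc (Suc (l + l))" by simp
  then show ?thesis unfolding bessel_coeff_def
    by (simp only: fact_Suc of_nat_Suc) (simp add: divide_simps, simp add: algebra_simps)
qed

lemma bessel_coeff_Suc_left:
  assumes "k \<le> l"
  shows "bessel_coeff (Suc l) k * (real l + 1 - real k) = (real l + 1 + real k) * bessel_coeff l k"
proof -
  obtain m where l: "l = k + m" using assms le_Suc_ex by blast
  have "Suc l - k = Suc m" "l - k = m" "Suc l + k = Suc (l + k)" using l by auto
  then show ?thesis unfolding bessel_coeff_def
    by (simp only: fact_Suc of_nat_Suc) (simp add: l divide_simps, simp add: algebra_simps)
qed

(* T_l(z) = i^l theta_l(-iz) for the reverse Bessel polynomial theta_l. *)
definition hankel_poly :: "nat \<Rightarrow> complex poly" where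
  "hankel_poly l = (\<Sum>k\<le>l. monom (of_real (bessel_coeff l k) * (\<i> / 2) ^ k) (l - k))"

lemma coeff_hankel_poly:
  "coeff (hankel_poly l) j = (if j \<le> l then of_real (bessel_coeff l (l - j)) * (\<i> / 2) ^ (l - j) else 0)"
proof -
  have "coeff (hankel_poly l) j = (\<Sum>k\<le>l. if k = l - j \<and> j \<le> l then of_real (bessel_coeff l k) * (\<i> / 2) ^ k else 0)"
    unfolding hankel_poly_def coeff_sum coeff_monom by (rule sum.cong) auto
  then show ?thesis by simp
qed

lemma degree_hankel_poly: "degree (hankel_poly l) = l"
  by (intro antisym degree_le le_degree) (simp_all add: coeff_hankel_poly)

lemma hankel_poly_0 [simp]: "hankel_poly 0 = 1"
  by (simp add: hankel_poly_def bessel_coeff_def)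

lemma hankel_poly_Suc:
  "hankel_poly (Suc l) = pCons 0 (hankel_poly l) + smult (\<i> * (2 * of_nat l + 1)) (hankel_poly l)
     - smult \<i> (pCons 0 (pderiv (hankel_poly l)))"
proof (rule poly_eqI)
  fix j
  show "coeff (hankel_poly (Suc l)) j = coeff (pCons 0 (hankel_poly l) + smult (\<i> * (2 * of_nat l + 1)) (hankel_poly l)
     - smult \<i> (pCons 0 (pderiv (hankel_poly l)))) j"
  proof (cases j)
    case 0
    have "complex_of_real (bessel_coeff (Suc l) (Suc l)) = 2 * (2 * of_nat l + 1) * of_real (bessel_coeff l l)"
      unfolding bessel_coeff_Suc_self by simp
    then show ?thesis using 0 by (simp add: coeff_hankel_poly algebra_simps)
  next
    case (Suc n)
    show ?thesis
    proof (cases "n < l")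
      case True
      define m where "m = l - Suc n"
      have m: "l - n = Suc m" "Suc l - Suc n = Suc m" "m < l" "l - Suc n = m"
        "(of_nat n :: complex) = of_nat l - of_nat m - 1"
        using True by (auto simp: m_def)
      have "complex_of_real (bessel_coeff (Suc l) (Suc m))
          = of_real (bessel_coeff l (Suc m)) + 2 * (of_nat l + of_nat m + 1) * of_real (bessel_coeff l m)"
        unfolding bessel_coeff_Suc_Suc[OF \<open>m < l\<close>] by simp
      then show ?thesis using True Suc by (simp add: coeff_hankel_poly coeff_pderiv m algebra_simps)
    qed (use Suc in \<open>simp add: coeff_hankel_poly coeff_pderiv\<close>)
  qed
qed

lemma pderiv_hankel_poly_Suc:
  "pderiv (hankel_poly (Suc l)) = smult \<i> (pCons 0 (hankel_poly l)) - smult \<i> (hankel_poly (Suc l))"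
proof (rule poly_eqI)
  fix j
  show "coeff (pderiv (hankel_poly (Suc l))) j
      = coeff (smult \<i> (pCons 0 (hankel_poly l)) - smult \<i> (hankel_poly (Suc l))) j"
  proof (cases j)
    case 0
    have "complex_of_real (bessel_coeff (Suc l) (Suc l)) = 2 * (2 * of_nat l + 1) * of_real (bessel_coeff l l)"
      unfolding bessel_coeff_Suc_self by simp
    moreover have "complex_of_real (bessel_coeff (Suc l) l) = (2 * of_nat l + 1) * of_real (bessel_coeff l l)"
      using arg_cong[OF bessel_coeff_Suc_left[of l l], of complex_of_real] by simp
    moreover have "Suc l - l = 1" by simp
    ultimately show ?thesis using 0 by (simp add: coeff_hankel_poly coeff_pderiv algebra_simps)
  next
    case (Suc n)
    show ?thesis
    proof (cases "n < l")
      case True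
      define m where "m = l - Suc n"
      have m: "l - n = Suc m" "Suc l - Suc n = Suc m" "m < l" "l - Suc n = m"
        "(of_nat n :: complex) = of_nat l - of_nat m - 1"
        using True by (auto simp: m_def)
      have "complex_of_real (bessel_coeff (Suc l) (Suc m))
          = of_real (bessel_coeff l (Suc m)) + 2 * (of_nat l + of_nat m + 1) * of_real (bessel_coeff l m)"
        unfolding bessel_coeff_Suc_Suc[OF \<open>m < l\<close>] by simp
      moreover have "(\<i> / 2) ^ m * (of_real (bessel_coeff (Suc l) m) * (of_nat l + 1 - of_nat m))
          = (\<i> / 2) ^ m * ((of_nat l + 1 + of_nat m) * complex_of_real (bessel_coeff l m))"
        using arg_cong[OF bessel_coeff_Suc_left[of m l], of complex_of_real] \<open>m < l\<close> by simp
      ultimately show ?thesis using True Suc by (simp add: coeff_hankel_poly coeff_pderiv m algebra_simps)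
    qed (use Suc in \<open>simp add: coeff_hankel_poly coeff_pderiv\<close>)
  qed
qed

abbreviation T :: "nat \<Rightarrow> complex \<Rightarrow> complex" where
  "T l z \<equiv> poly (hankel_poly l) z"

abbreviation T' :: "nat \<Rightarrow> complex \<Rightarrow> complex" where
  "T' l z \<equiv> poly (pderiv (hankel_poly l)) z"

lemma poly_hankel_poly: "T l z = (\<Sum>k\<le>l. of_real (bessel_coeff l k) * (\<i> / 2) ^ k * z ^ (l - k))"
  by (simp add: hankel_poly_def poly_sum poly_monom)

lemma T_Suc: "T (Suc l) z = (z + \<i> * (2 * of_nat l + 1)) * T l z - \<i> * z * T' l z"
  by (subst hankel_poly_Suc) (simp add: algebra_simps)

lemma T'_Suc: "T' (Suc l) z = \<i> * z * T l z - \<i> * T (Suc l) z"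
  by (subst pderiv_hankel_poly_Suc) (simp add: algebra_simps)

lemma T_0_nonzero: "T l 0 \<noteq> 0"
  using bessel_coeff_pos[of l l] by (simp add: poly_0_coeff_0 coeff_hankel_poly)

lemma T_T'_no_common_zero: "z \<noteq> 0 \<Longrightarrow> T l z = 0 \<Longrightarrow> T' l z \<noteq> 0"
proof (induction l)
  case (Suc l)
  show ?case
  proof
    assume "T' (Suc l) z = 0"
    then have "T l z = 0" using Suc.prems T'_Suc[of l z] by simp
    moreover from this have "T' l z = 0" using Suc.prems T_Suc[of l z] by simp
    ultimately show False using Suc by blast
  qed
qed simp

lemma T_neg_cnj: "T l (- cnj z) = (- 1) ^ l * cnj (T l z) \<and> T' l (- cnj z) = (- 1) ^ Suc l * cnj (T' l z)"
proof (induction l)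
  case (Suc l)
  then have "T (Suc l) (- cnj z) = (- 1) ^ Suc l * cnj (T (Suc l) z)"
    by (simp add: T_Suc algebra_simps)
  with Suc show ?case by (simp add: T'_Suc algebra_simps)
qed simp

lemma sph_hankel1_eq:
  assumes "z \<noteq> 0"
  shows "sph_hankel1 l z = (- \<i>) ^ (l + 1) * exp (\<i> * z) * T l z / z ^ (l + 1)"
proof -
  have "(\<Sum>k\<le>l. (\<i> / (2 * z)) ^ k * (fact (l + k) / (fact k * fact (l - k)))) = T l z / z ^ l"
    unfolding poly_hankel_poly sum_divide_distrib
  proof (rule sum.cong[OF refl])
    fix k assume "k \<in> {..l}"
    then have "z ^ l = z ^ k * z ^ (l - k)" by (simp flip: power_add)
    then show "(\<i> / (2 * z)) ^ k * (fact (l + k) / (fact k * fact (l - k))) =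
         of_real (bessel_coeff l k) * (\<i> / 2) ^ k * z ^ (l - k) / z ^ l"
      using assms by (simp add: bessel_coeff_def power_divide field_simps)
  qed
  then show ?thesis unfolding sph_hankel1_def using assms by (simp add: field_simps)
qed

definition hankel_ratio :: "nat \<Rightarrow> complex \<Rightarrow> complex" where
  "hankel_ratio l z = \<i> * z + z * T' l z / T l z"

lemma G_fun_eq_hankel_ratio:
  assumes "z \<noteq> 0" "T l z \<noteq> 0"
  shows "G_fun l z = hankel_ratio l z - of_nat (l + 1)"
proof -
  define H where "H = (\<lambda>z. (- \<i>) ^ (l + 1) * exp (\<i> * z) * T l z / z ^ (l + 1))"
  have "(H has_field_derivative H z * (\<i> + T' l z / T l z - of_nat (l + 1) / z)) (at z)"
  proof -
    have "((\<lambda>z. (- \<i>) ^ (l + 1) * exp (\<i> * z) * T l z) has_field_derivative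
         (- \<i>) ^ (l + 1) * (\<i> * exp (\<i> * z) * T l z + exp (\<i> * z) * T' l z)) (at z)"
      by (auto intro!: derivative_eq_intros simp: algebra_simps)
    moreover have "((\<lambda>z. z ^ (l + 1)) has_field_derivative of_nat (l + 1) * z ^ l) (at z)"
      using DERIV_power[OF DERIV_ident, of "l + 1" z UNIV] by simp
    ultimately have "(H has_field_derivative ((- \<i>) ^ (l + 1) * (\<i> * exp (\<i> * z) * T l z + exp (\<i> * z) * T' l z) * z ^ (l + 1)
       - (- \<i>) ^ (l + 1) * exp (\<i> * z) * T l z * (of_nat (l + 1) * z ^ l)) / (z ^ (l + 1) * z ^ (l + 1))) (at z)"
      unfolding H_def using DERIV_divide assms by fastforce
    moreover have "((- \<i>) ^ (l + 1) * (\<i> * exp (\<i> * z) * T l z + exp (\<i> * z) * T' l z) * z ^ (l + 1)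
       - (- \<i>) ^ (l + 1) * exp (\<i> * z) * T l z * (of_nat (l + 1) * z ^ l)) / (z ^ (l + 1) * z ^ (l + 1))
       = H z * (\<i> + T' l z / T l z - of_nat (l + 1) / z)"
      unfolding H_def using assms by (simp add: field_simps power_Suc)
    ultimately show ?thesis by simp
  qed
  moreover have "\<forall>\<^sub>F x in nhds z. sph_hankel1 l x = H x"
  proof -
    have "\<forall>\<^sub>F x in nhds z. x \<noteq> 0" using assms(1) by (rule t1_space_nhds)
    then show ?thesis by eventually_elim (simp add: H_def sph_hankel1_eq)
  qed
  ultimately have "deriv (sph_hankel1 l) z = H z * (\<i> + T' l z / T l z - of_nat (l + 1) / z)"
    by (simp add: deriv_cong_ev DERIV_imp_deriv)
  moreover have "sph_hankel1 l z = H z" "H z \<noteq> 0"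
    using assms by (simp_all add: H_def sph_hankel1_eq)
  ultimately show ?thesis
    unfolding G_fun_def hankel_ratio_def using assms by (simp add: field_simps)
qed

lemma T_Suc_hankel_ratio:
  "T l z \<noteq> 0 \<Longrightarrow> T (Suc l) z = \<i> * T l z * (2 * of_nat l + 1 - hankel_ratio l z)"
  unfolding hankel_ratio_def T_Suc by (simp add: field_simps)

lemma hankel_ratio_Suc:
  assumes "T l z \<noteq> 0" "2 * of_nat l + 1 - hankel_ratio l z \<noteq> 0"
  shows "hankel_ratio (Suc l) z = z\<^sup>2 / (2 * of_nat l + 1 - hankel_ratio l z)"
proof -
  have "T (Suc l) z \<noteq> 0" using assms T_Suc_hankel_ratio by simp
  then have "hankel_ratio (Suc l) z = \<i> * z\<^sup>2 * T l z / T (Suc l) z"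
    unfolding hankel_ratio_def T'_Suc by (simp add: field_simps power2_eq_square)
  then show ?thesis using assms by (simp add: T_Suc_hankel_ratio)
qed

lemma Im_eq_0_if_square_pos:
  assumes "w\<^sup>2 = of_real s" "s > 0"
  shows "Im w = 0"
proof (rule ccontr)
  assume "Im w \<noteq> 0"
  moreover have "Re w * Im w = 0" using arg_cong[OF assms(1), of Im] by (auto simp: power2_eq_square)
  ultimately have "Re w = 0" by simp
  then have "(Im w)\<^sup>2 + s = 0" using arg_cong[OF assms(1), of Re] by (simp add: power2_eq_square)
  with assms(2) show False by (metis add_nonneg_pos less_irrefl zero_le_power2)
qed

definition sq_cone :: "complex \<Rightarrow> complex set" where
  "sq_cone z = {of_real b * z\<^sup>2 - of_real a | a b. a \<ge> 0 \<and> b \<ge> 0}"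

lemma i_mult_in_sq_cone:
  assumes "Im z > 0"
  shows "\<i> * z \<in> sq_cone z"
proof -
  have "\<i> * z = of_real (1 / (2 * Im z)) * z\<^sup>2 - of_real (((Re z)\<^sup>2 + (Im z)\<^sup>2) / (2 * Im z))"
    using assms by (simp add: complex_eq_iff power2_eq_square field_simps)
  moreover have "1 / (2 * Im z) \<ge> 0" "((Re z)\<^sup>2 + (Im z)\<^sup>2) / (2 * Im z) \<ge> 0"
    using assms by simp_all
  ultimately show ?thesis unfolding sq_cone_def by blast
qed

lemma divide_in_sq_cone:
  assumes z: "Im z > 0" and w: "w \<in> sq_cone z" and c: "c > 0"
  shows "of_real c - w \<noteq> 0 \<and> z\<^sup>2 / (of_real c - w) \<in> sq_cone z"
proof -
  obtain a b where ab: "a \<ge> 0" "b \<ge> 0" "w = of_real b * z\<^sup>2 - of_real a"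
    using w unfolding sq_cone_def by blast
  define u where "u = of_real (c + a) - of_real b * z\<^sup>2"
  have u: "of_real c - w = u" by (simp add: u_def ab(3))
  have "u \<noteq> 0"
  proof
    assume "u = 0"
    moreover have "c + a > 0" using ab c by simp
    ultimately have "b \<noteq> 0" unfolding u_def by (metis diff_zero mult_zero_left of_real_0 of_real_eq_0_iff less_irrefl)
    with \<open>u = 0\<close> have "z\<^sup>2 = of_real ((c + a) / b)"
      by (simp add: u_def field_simps)
    moreover have "(c + a) / b > 0" using ab c \<open>b \<noteq> 0\<close> by simp
    ultimately have "Im z = 0" by (rule Im_eq_0_if_square_pos)
    with z show False by simp
  qed
  \<comment> \<open>Divide through by u via its conjugate: z^2 * cnj (z^2) = |z|^4 is real.\<close>
  define D where "D = (cmod u)\<^sup>2"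
  have D: "D > 0" using \<open>u \<noteq> 0\<close> by (simp add: D_def)
  have zz: "z\<^sup>2 * cnj (z\<^sup>2) = of_real ((cmod z) ^ 4)"
    by (metis complex_norm_square power_mult_distrib complex_cnj_power of_real_power power2_eq_square
        power_mult numeral_Bit0 mult_2)
  have "z\<^sup>2 / u = z\<^sup>2 * cnj u / of_real D"
    using \<open>u \<noteq> 0\<close> D by (simp add: D_def field_simps flip: complex_norm_square)
  also have "\<dots> = of_real ((c + a) / D) * z\<^sup>2 - of_real (b * (cmod z) ^ 4 / D)"
    unfolding u_def using D zz[symmetric] by (simp add: field_simps)
  finally have "z\<^sup>2 / u = of_real ((c + a) / D) * z\<^sup>2 - of_real (b * (cmod z) ^ 4 / D)" .
  moreover have "(c + a) / D \<ge> 0" "b * (cmod z) ^ 4 / D \<ge> 0" using ab c D by auto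
  ultimately show ?thesis using \<open>u \<noteq> 0\<close> unfolding u sq_cone_def by blast
qed

lemma Im_divide_real_square:
  assumes "Im z = 0" and "Im w * Re z > 0"
  shows "Im (z\<^sup>2 / (of_real c - w)) * Re z > 0"
proof -
  define D where "D = (Re (of_real c - w))\<^sup>2 + (Im (of_real c - w))\<^sup>2"
  have "Im w \<noteq> 0" using assms(2) by auto
  then have "D > 0" by (simp add: D_def sum_power2_gt_zero_iff)
  have "Im (z\<^sup>2 / (of_real c - w)) * Re z = (Re z)\<^sup>2 * (Im w * Re z) / D"
    using assms(1) by (simp add: Im_divide D_def power2_eq_square)
  also have "\<dots> > 0" using assms(2) \<open>D > 0\<close> by (auto intro!: divide_pos_pos mult_pos_pos)
  finally show ?thesis .
qed

lemma hankel_ratio_closed_upper_half_plane: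
  assumes "z \<noteq> 0" "Im z \<ge> 0"
  shows "T l z \<noteq> 0 \<and> (Im z > 0 \<longrightarrow> hankel_ratio l z \<in> sq_cone z)
     \<and> (Im z = 0 \<longrightarrow> Im (hankel_ratio l z) * Re z > 0)"
proof (induction l)
  case 0
  have "Im z = 0 \<Longrightarrow> Re z \<noteq> 0" using assms(1) complex_eq_iff by auto
  then show ?case by (auto simp: hankel_ratio_def i_mult_in_sq_cone zero_less_mult_iff linorder_neq_iff)
next
  case (Suc l)
  define c :: real where "c = 2 * real l + 1"
  have c: "c > 0" "2 * of_nat l + 1 = complex_of_real c" by (simp_all add: c_def)
  have "of_real c - hankel_ratio l z \<noteq> 0"
  proof (cases "Im z > 0")
    case True
    then show ?thesis using Suc divide_in_sq_cone c by blast
  next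
    case False
    then have "Im (hankel_ratio l z) \<noteq> 0" using Suc assms(2) by fastforce
    then show ?thesis by (auto simp: complex_eq_iff)
  qed
  then have "T (Suc l) z \<noteq> 0" "hankel_ratio (Suc l) z = z\<^sup>2 / (of_real c - hankel_ratio l z)"
    using Suc T_Suc_hankel_ratio hankel_ratio_Suc c(2) by auto
  then show ?case using Suc c divide_in_sq_cone Im_divide_real_square by auto
qed

lemma resonance_equation_no_upper_root:
  fixes r \<epsilon> :: real
  assumes r: "r > 0" and \<epsilon>: "\<epsilon> > 0" and w: "w \<noteq> 0" "Im w \<ge> 0"
  shows "w\<^sup>2 + of_real r * (hankel_ratio l (of_real \<epsilon> * w) - of_nat (l + 1)) \<noteq> 0"
proof
  define z where "z = of_real \<epsilon> * w"
  assume eq: "w\<^sup>2 + of_real r * (hankel_ratio l z - of_nat (l + 1)) = 0"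
  have "z \<noteq> 0" "Im z = \<epsilon> * Im w" using w \<epsilon> by (simp_all add: z_def)
  note closed = hankel_ratio_closed_upper_half_plane[OF \<open>z \<noteq> 0\<close>, of l]
  show False
  proof (cases "Im w > 0")
    case True
    then obtain a b where ab: "a \<ge> 0" "b \<ge> 0" "hankel_ratio l z = of_real b * z\<^sup>2 - of_real a"
      using closed \<open>Im z = \<epsilon> * Im w\<close> \<epsilon> unfolding sq_cone_def by auto
    have pos: "1 + r * b * \<epsilon>\<^sup>2 > 0" using r ab(2) by (simp add: add_pos_nonneg)
    have "hankel_ratio l z = of_real (b * \<epsilon>\<^sup>2) * w\<^sup>2 - of_real a"
      using ab(3) by (simp add: z_def power_mult_distrib)
    with eq have "w\<^sup>2 * of_real (1 + r * b * \<epsilon>\<^sup>2) = of_real (r * (a + real l + 1))"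
      by (simp add: algebra_simps)
    then have "w\<^sup>2 = of_real (r * (a + real l + 1) / (1 + r * b * \<epsilon>\<^sup>2))"
      using pos by (simp add: field_simps del: of_real_add)
    moreover have "r * (a + real l + 1) / (1 + r * b * \<epsilon>\<^sup>2) > 0" using r ab pos by simp
    ultimately have "Im w = 0" by (rule Im_eq_0_if_square_pos)
    with True show False by simp
  next
    case False
    then have "Im w = 0" using w by simp
    then have "Im (hankel_ratio l z) * Re z > 0" using closed \<open>Im z = \<epsilon> * Im w\<close> by simp
    moreover have "r * Im (hankel_ratio l z) = 0"
      using arg_cong[OF eq, of Im] \<open>Im w = 0\<close> by (simp add: power2_eq_square)
    ultimately show False using r by simp
  qed
qed

lemma zorder_poly_divide:
  fixes p q :: "complex poly"
  assumes "p \<noteq> 0" "poly q w \<noteq> 0"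
  shows "zorder (\<lambda>z. poly p z / poly q z) w = int (order w p)"
proof -
  obtain s where s: "p = [:- w, 1:] ^ order w p * s" "\<not> [:- w, 1:] dvd s"
    using order_decomp[OF assms(1)] by blast
  show ?thesis
  proof (rule zorder_eqI)
    show "open {z. poly q z \<noteq> 0}" by (rule open_Collect_neq) (auto intro: continuous_intros)
    show "(\<lambda>z. poly s z / poly q z) holomorphic_on {z. poly q z \<noteq> 0}"
      by (intro holomorphic_intros) auto
    show "poly s w / poly q w \<noteq> 0" using s(2) assms(2) by (simp add: poly_eq_0_iff_dvd)
    show "poly p z / poly q z = poly s z / poly q z * (z - w) powi int (order w p)" for z
      by (subst s(1)) (simp add: algebra_simps)
  qed (use assms(2) in simp)
qed

(* G_l(z) = (G_numer_poly l)(z) / T_l(z) wherever T_l(z) and z are nonzero. *)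
definition G_numer_poly :: "nat \<Rightarrow> complex poly" where
  "G_numer_poly l = [:0, 1:] * (smult \<i> (hankel_poly l) + pderiv (hankel_poly l))
     - smult (of_nat (l + 1)) (hankel_poly l)"

definition resonance_poly :: "real \<Rightarrow> real \<Rightarrow> nat \<Rightarrow> complex poly" where
  "resonance_poly r \<epsilon> l = monom 1 2 * (hankel_poly l \<circ>\<^sub>p [:0, of_real \<epsilon>:])
     + smult (of_real r) (G_numer_poly l \<circ>\<^sub>p [:0, of_real \<epsilon>:])"

lemma poly_resonance_poly:
  "poly (resonance_poly r \<epsilon> l) z = z\<^sup>2 * T l (of_real \<epsilon> * z)
     + of_real r * (of_real \<epsilon> * z * (\<i> * T l (of_real \<epsilon> * z) + T' l (of_real \<epsilon> * z))
                    - of_nat (l + 1) * T l (of_real \<epsilon> * z))"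
  by (simp add: resonance_poly_def G_numer_poly_def poly_pcompose poly_monom mult.commute)

lemma poly_resonance_poly_eq:
  assumes "of_real \<epsilon> * z \<noteq> 0" "T l (of_real \<epsilon> * z) \<noteq> 0"
  shows "poly (resonance_poly r \<epsilon> l) z = T l (of_real \<epsilon> * z) * (z\<^sup>2 + of_real r * G_fun l (of_real \<epsilon> * z))"
  unfolding poly_resonance_poly G_fun_eq_hankel_ratio[OF assms] hankel_ratio_def
  using assms by (simp add: field_simps)

lemma poly_resonance_poly_neg_cnj:
  "poly (resonance_poly r \<epsilon> l) (- cnj z) = (- 1) ^ l * cnj (poly (resonance_poly r \<epsilon> l) z)"
proof -
  have "of_real \<epsilon> * - cnj z = - cnj (of_real \<epsilon> * z)" by simp
  then show ?thesis
    unfolding poly_resonance_poly by (simp only: T_neg_cnj) (simp add: algebra_simps)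
qed

lemma degree_resonance_poly:
  assumes "\<epsilon> \<noteq> 0"
  shows "degree (resonance_poly r \<epsilon> l) = l + 2"
proof -
  have "hankel_poly l \<circ>\<^sub>p [:0, of_real \<epsilon>:] \<noteq> 0"
    using T_0_nonzero[of l] by (metis poly_0 poly_pcompose pCons_0_0 poly_pCons mult_zero_left add_0)
  moreover have "degree (hankel_poly l \<circ>\<^sub>p [:0, of_real \<epsilon>:]) = l"
    using assms by (simp add: degree_pcompose degree_hankel_poly)
  ultimately have "degree (monom 1 2 * (hankel_poly l \<circ>\<^sub>p [:0, of_real \<epsilon>:])) = l + 2"
    by (simp add: degree_mult_eq degree_monom_eq)
  moreover have "degree (G_numer_poly l \<circ>\<^sub>p [:0, of_real \<epsilon>:]) \<le> l + 1"
  proof -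
    have "degree (smult \<i> (hankel_poly l) + pderiv (hankel_poly l)) \<le> l"
      by (intro degree_add_le) (simp_all add: degree_hankel_poly degree_pderiv)
    then have "degree (G_numer_poly l) \<le> l + 1"
      unfolding G_numer_poly_def
      by (intro degree_diff_le order_trans[OF degree_mult_le]) (simp_all add: degree_hankel_poly)
    then show ?thesis by (simp add: degree_pcompose)
  qed
  ultimately show ?thesis unfolding resonance_poly_def
    by (subst degree_add_eq_left) (auto intro: le_less_trans[OF degree_smult_le])
qed

lemma sum_order_roots_complex:
  fixes p :: "complex poly"
  assumes "p \<noteq> 0"
  shows "(\<Sum>w | poly p w = 0. order w p) = degree p"
  using assms by (simp add: size_multiset_overloaded_eq flip: size_proots_complex)

lemma resonance_poly_root_imp:
  assumes "r > 0" "\<epsilon> > 0" "poly (resonance_poly r \<epsilon> l) w = 0"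
  shows "w \<noteq> 0" "T l (of_real \<epsilon> * w) \<noteq> 0"
proof -
  show "w \<noteq> 0"
    using assms T_0_nonzero[of l] of_nat_neq_0[of l, where 'a=complex]
    by (auto simp: poly_resonance_poly)
  show "T l (of_real \<epsilon> * w) \<noteq> 0"
  proof
    assume T: "T l (of_real \<epsilon> * w) = 0"
    then have "T' l (of_real \<epsilon> * w) = 0" using assms \<open>w \<noteq> 0\<close> by (simp add: poly_resonance_poly)
    with T show False using T_T'_no_common_zero \<open>w \<noteq> 0\<close> assms(2) by simp
  qed
qed

lemma r_hat_pos:
  assumes "Ca > 0" "We > 0" "\<gamma> > 1" "l \<noteq> 1"
  shows "r_hat Ca We \<gamma> l > 0"
proof (cases "l = 0")
  case False
  with assms(4) have "real l - 1 > 0" by linarith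
  with False assms(2) show ?thesis by (simp add: r_hat_def)
qed (use assms in \<open>simp add: r_hat_def add_pos_pos\<close>)

lemma resonances_eq_roots:
  assumes "r_hat Ca We \<gamma> l > 0" "\<epsilon> > 0"
  shows "resonances Ca We \<gamma> \<epsilon> l = {w. poly (resonance_poly (r_hat Ca We \<gamma> l) \<epsilon> l) w = 0}"
proof (intro set_eqI iffI; simp)
  fix w
  have hankel: "sph_hankel1 l (of_real \<epsilon> * w) \<noteq> 0 \<longleftrightarrow> T l (of_real \<epsilon> * w) \<noteq> 0" if "w \<noteq> 0"
    using that assms(2) by (simp add: sph_hankel1_eq)
  show "poly (resonance_poly (r_hat Ca We \<gamma> l) \<epsilon> l) w = 0" if "w \<in> resonances Ca We \<gamma> \<epsilon> l"
    using that assms(2) hankel by (simp add: resonances_def poly_resonance_poly_eq)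
  show "w \<in> resonances Ca We \<gamma> \<epsilon> l" if "poly (resonance_poly (r_hat Ca We \<gamma> l) \<epsilon> l) w = 0"
    using that assms resonance_poly_root_imp[OF assms that] hankel
    by (simp add: resonances_def poly_resonance_poly_eq)
qed

lemma zorder_resonance_equation:
  assumes "r > 0" "\<epsilon> > 0" "poly (resonance_poly r \<epsilon> l) w = 0"
  shows "zorder (\<lambda>z. z\<^sup>2 + of_real r * G_fun l (of_real \<epsilon> * z)) w = int (order w (resonance_poly r \<epsilon> l))"
proof -
  define Q where "Q = hankel_poly l \<circ>\<^sub>p [:0, of_real \<epsilon>:]"
  have Q: "poly Q z = T l (of_real \<epsilon> * z)" for z by (simp add: Q_def poly_pcompose mult.commute)
  have "open {z. z \<noteq> 0 \<and> poly Q z \<noteq> 0}"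
    by (intro open_Collect_conj open_Collect_neq) (auto intro: continuous_intros)
  from eventually_at_in_open'[OF this] have "\<forall>\<^sub>F z in at w. z \<noteq> 0 \<and> poly Q z \<noteq> 0"
    using resonance_poly_root_imp[OF assms] by (simp add: Q)
  then have "\<forall>\<^sub>F z in at w. z\<^sup>2 + of_real r * G_fun l (of_real \<epsilon> * z) = poly (resonance_poly r \<epsilon> l) z / poly Q z"
    by eventually_elim (use assms(2) in \<open>simp add: Q poly_resonance_poly_eq\<close>)
  then have "zorder (\<lambda>z. z\<^sup>2 + of_real r * G_fun l (of_real \<epsilon> * z)) w
      = zorder (\<lambda>z. poly (resonance_poly r \<epsilon> l) z / poly Q z) w"
    by (rule zorder_cong) simp
  also have "\<dots> = int (order w (resonance_poly r \<epsilon> l))"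
    using resonance_poly_root_imp[OF assms] assms(2) degree_resonance_poly[of \<epsilon> r l]
    by (intro zorder_poly_divide) (auto simp: Q)
  finally show ?thesis .
qed

lemma resonance_poly_roots_lower_half_plane:
  assumes "r > 0" "\<epsilon> > 0" "poly (resonance_poly r \<epsilon> l) w = 0"
  shows "Im w < 0"
proof (rule ccontr)
  assume "\<not> Im w < 0"
  note root = resonance_poly_root_imp[OF assms]
  then have "poly (resonance_poly r \<epsilon> l) w
      = T l (of_real \<epsilon> * w) * (w\<^sup>2 + of_real r * (hankel_ratio l (of_real \<epsilon> * w) - of_nat (l + 1)))"
    using assms(2) by (simp add: poly_resonance_poly_eq G_fun_eq_hankel_ratio)
  also have "\<dots> \<noteq> 0"
    using root resonance_equation_no_upper_root[OF assms(1,2) root(1)] \<open>\<not> Im w < 0\<close> by simp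
  finally show False using assms(3) by simp
qed

theorem theorem6p1:
  fixes Ca We \<gamma> \<epsilon> :: real and l :: nat
  assumes "Ca > 0" and "We > 0" and "\<gamma> > 1" and "\<epsilon> > 0" and "l \<noteq> 1"
  shows "finite (resonances Ca We \<gamma> \<epsilon> l)
    \<and> (\<Sum>w\<in>resonances Ca We \<gamma> \<epsilon> l.
          zorder (\<lambda>z. z\<^sup>2 + of_real (r_hat Ca We \<gamma> l) * G_fun l (of_real \<epsilon> * z)) w)
        = int (l + 2)
    \<and> (\<forall>w\<in>resonances Ca We \<gamma> \<epsilon> l. - cnj w \<in> resonances Ca We \<gamma> \<epsilon> l)
    \<and> (\<forall>w\<in>resonances Ca We \<gamma> \<epsilon> l. Im w < 0)"
proof -
  define r where "r = r_hat Ca We \<gamma> l"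
  define P where "P = resonance_poly r \<epsilon> l"
  have r: "r > 0" unfolding r_def using r_hat_pos assms by blast
  have roots: "resonances Ca We \<gamma> \<epsilon> l = {w. poly P w = 0}"
    using resonances_eq_roots[OF r[unfolded r_def] assms(4)] by (simp add: P_def r_def)
  have P: "P \<noteq> 0" "degree P = l + 2"
    using degree_resonance_poly[of \<epsilon> r l] assms(4) by (auto simp: P_def)
  have "(\<Sum>w | poly P w = 0. zorder (\<lambda>z. z\<^sup>2 + of_real r * G_fun l (of_real \<epsilon> * z)) w)
      = (\<Sum>w | poly P w = 0. int (order w P))"
    using zorder_resonance_equation[OF r assms(4)] by (simp add: P_def)
  also have "\<dots> = int (\<Sum>w | poly P w = 0. order w P)" by simp
  also have "\<dots> = int (l + 2)" using sum_order_roots_complex[OF P(1)] P(2) by simp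
  finally have "(\<Sum>w\<in>resonances Ca We \<gamma> \<epsilon> l. zorder (\<lambda>z. z\<^sup>2 + of_real r * G_fun l (of_real \<epsilon> * z)) w)
      = int (l + 2)" by (simp add: roots)
  moreover have "finite (resonances Ca We \<gamma> \<epsilon> l)" using poly_roots_finite[OF P(1)] by (simp add: roots)
  moreover have "- cnj w \<in> resonances Ca We \<gamma> \<epsilon> l" if "w \<in> resonances Ca We \<gamma> \<epsilon> l" for w
    using that poly_resonance_poly_neg_cnj[of r \<epsilon> l w] by (simp add: roots P_def)
  moreover have "Im w < 0" if "w \<in> resonances Ca We \<gamma> \<epsilon> l" for w
    using that resonance_poly_roots_lower_half_plane[OF r assms(4)] by (simp add: roots P_def)
  ultimately show ?thesis unfolding r_def by blast
qed

end
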